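(* With $V$ satisfying (C1)–(C4), $\mathbb P(A):=V_A(1_\Omega)$, and $u^+$ as defined in the context, the map $T_{u^+}(f):=\int_\Omega u^+(\omega,f(\omega))\,\mathbb P(d\omega)$ is well defined and finite on $\mathcal L^\infty(\Omega,\mathcal F)$, monotone with respect to the pointwise order, pointwise continuous (if $(f_n)$ is uniformly bounded and $f_n\to f$ pointwise everywhere then $T_{u^+}(f_n)\to T_{u^+}(f)$), and satisfies $V_A(f)=T_{u^+}(f1_A)$ for every $f\in\mathcal L^\infty(\Omega,\mathcal F)$ and $A\in\mathcal F$.
   Context: $\mathcal L^\infty(\Omega,\mathcal F)$: bounded $\mathcal F$-measurable real functions; $V:\mathcal F\times\mathcal L^\infty(\Omega,\mathcal F)\to\mathbb R$, $(A,f)\mapsto V_A(f)$, with: (C1) for every $f$, $A\mapsto V_A(f)$ is a finite signed measure, $V_A(0)=0$, and $A\mapsto V_A(1_\Omega)$ is a probability measure; (C2) $V_A(f)=V_\Omega(f1_A)$; (C3) $f\le g$ pointwise implies $V_A(f)\le V_A(g)$, and $\mathbb P(A)>0$ implies $V_A(x)<V_A(y)$ for real $x<y$; (C4) $V_A(f_n)\to V_A(f)$ whenever $(f_n)$ is uniformly bounded and converges pointwise everywhere to $f$. For $q\in\mathbb Q$, $u(\cdot,q)$ is a version of $d\mu_q/d\mathbb P$, $\mu_q(A):=V_A(q)$, with $u(\cdot,0)\equiv0$. $\Theta:=\{\omega: u(\omega,q_1)<u(\omega,q_2)\ \forall q_1<q_2\in\mathbb Q\}\cap\{\omega: u(\omega,q)=\inf_{\tilde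 q\in\mathbb Q,\tilde q>q}u(\omega,\tilde q)\ \forall q\in\mathbb Q\}$, and $u^+(\omega,x):=\inf_{q\in\mathbb Q,q\ge x}\{u(\omega,q)1_\Theta(\omega)+x1_{\Omega\setminus\Theta}(\omega)\}$. *)

theory Defs
  imports "HOL-Analysis.Analysis"
begin

definition Linf :: "'a measure \<Rightarrow> ('a \<Rightarrow> real) set" where
  "Linf M = {f. f \<in> borel_measurable M \<and> (\<exists>B. \<forall>x\<in>space M. \<bar>f x\<bar> \<le> B)}"

definition finite_signed_measure :: "'a measure \<Rightarrow> ('a set \<Rightarrow> real) \<Rightarrow> bool" where
  "finite_signed_measure M \<mu> \<longleftrightarrow> \<mu> {} = 0 \<and>
     (\<forall>A :: nat \<Rightarrow> 'a set. range A \<subseteq> sets M \<longrightarrow> disjoint_family A \<longrightarrow>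
        (\<lambda>n. \<mu> (A n)) sums \<mu> (\<Union>n. A n))"

definition probability_set_function :: "'a measure \<Rightarrow> ('a set \<Rightarrow> real) \<Rightarrow> bool" where
  "probability_set_function M \<mu> \<longleftrightarrow> finite_signed_measure M \<mu> \<and>
     (\<forall>A\<in>sets M. 0 \<le> \<mu> A) \<and> \<mu> (space M) = 1"

definition Pm :: "'a measure \<Rightarrow> ('a set \<Rightarrow> ('a \<Rightarrow> real) \<Rightarrow> real) \<Rightarrow> 'a measure" where
  "Pm M V = measure_of (space M) (sets M) (\<lambda>A. ennreal (V A (\<lambda>_. 1)))"

definition Theta :: "('a \<Rightarrow> rat \<Rightarrow> real) \<Rightarrow> 'a set" where
  "Theta u = {\<omega>. (\<forall>q1 q2. q1 < q2 \<longrightarrow> u \<omega> q1 < u \<omega> q2)}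
           \<inter> {\<omega>. (\<forall>q. u \<omega> q = Inf (u \<omega> ` {q'. q' > q}))}"

definition u_plus :: "('a \<Rightarrow> rat \<Rightarrow> real) \<Rightarrow> 'a \<Rightarrow> real \<Rightarrow> real" where
  "u_plus u \<omega> x = Inf ((\<lambda>q. u \<omega> q * indicator (Theta u) \<omega> + x * indicator (- Theta u) \<omega>)
                        ` {q. x \<le> real_of_rat q})"

definition T_u :: "'a measure \<Rightarrow> ('a set \<Rightarrow> ('a \<Rightarrow> real) \<Rightarrow> real) \<Rightarrow> ('a \<Rightarrow> rat \<Rightarrow> real)
                    \<Rightarrow> ('a \<Rightarrow> real) \<Rightarrow> real" where
  "T_u M V u f = (\<integral>\<omega>. u_plus u \<omega> (f \<omega>) \<partial>(Pm M V))"

end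

theory Submission
  imports Defs
begin

(* For P-almost every omega, (C3) makes u(omega, -) strictly increasing on the rationals and
   (C4) makes it right continuous, i.e. P(Theta) = 1; on Theta, u_plus(omega, -) is the increasing
   right continuous extension of u(omega, -) to the reals. For a rational-valued simple f,
   countable additivity of A |-> V_A(f) together with (C2) gives V_Omega(f) = int u(omega, f omega) dP.
   A bounded f is the pointwise limit from above of its dyadic roundings ceil(2^n f) / 2^n; (C4)
   passes V_Omega to the limit, and right continuity of u_plus together with dominated convergence
   (by |u(-, -c)| + |u(-, c)|) passes the integrals. Hence T(f) = V_Omega(f), and the remaining claims
   are (C3), (C4) and (C2). *)

lemma Theta_strict_mono: "\<omega> \<in> Theta u \<Longrightarrow> q1 < q2 \<Longrightarrow> u \<omega> q1 < u \<omega> q2"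
  unfolding Theta_def by blast

lemma Theta_mono: "\<omega> \<in> Theta u \<Longrightarrow> q1 \<le> q2 \<Longrightarrow> u \<omega> q1 \<le> u \<omega> q2"
  by (metis Theta_strict_mono order.order_iff_strict)

lemma Theta_abs_le:
  assumes "\<omega> \<in> Theta u" and "\<bar>q\<bar> \<le> c"
  shows "\<bar>u \<omega> q\<bar> \<le> \<bar>u \<omega> (- c)\<bar> + \<bar>u \<omega> c\<bar>"
proof -
  have "- c \<le> q" "q \<le> c"
    using assms(2) by (simp_all add: abs_le_iff)
  then have "u \<omega> (- c) \<le> u \<omega> q" "u \<omega> q \<le> u \<omega> c"
    using Theta_mono[OF assms(1)] by blast+
  then show ?thesis
    by linarith
qed

lemma Theta_right_continuous: "\<omega> \<in> Theta u \<Longrightarrow> u \<omega> q = Inf (u \<omega> ` {q'. q' > q})"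
  unfolding Theta_def by blast

lemma Theta_right_approx:
  assumes "\<omega> \<in> Theta u" and "e > 0"
  obtains q' where "q' > q" and "u \<omega> q' < u \<omega> q + e"
proof -
  have "u \<omega> ` {q'. q' > q} \<noteq> {}"
    using gt_ex[of q] by blast
  moreover have "Inf (u \<omega> ` {q'. q' > q}) < u \<omega> q + e"
    using Theta_right_continuous[OF assms(1), of q] assms(2) by simp
  ultimately have "\<exists>y \<in> u \<omega> ` {q'. q' > q}. y < u \<omega> q + e"
    by (rule cInf_lessD)
  then show ?thesis
    using that by auto
qed

lemma Inf_greater_rat_eqI:
  fixes g :: "rat \<Rightarrow> real"
  assumes "mono g" and approx: "\<And>e. e > 0 \<Longrightarrow> \<exists>q'>q. g q' < g q + e"
  shows "g q = Inf (g ` {q'. q' > q})"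
proof (rule antisym)
  have nonempty: "g ` {q'. q' > q} \<noteq> {}"
    using gt_ex[of q] by blast
  have lower: "g q \<le> y" if "y \<in> g ` {q'. q' > q}" for y
    using that monoD[OF \<open>mono g\<close>, of q] by force
  then show "g q \<le> Inf (g ` {q'. q' > q})"
    by (rule cInf_greatest[OF nonempty])
  show "Inf (g ` {q'. q' > q}) \<le> g q"
  proof (rule field_le_epsilon)
    fix e :: real assume "e > 0"
    then obtain q' where "q' > q" "g q' < g q + e"
      using approx by blast
    moreover have "Inf (g ` {q'. q' > q}) \<le> g q'"
      using \<open>q' > q\<close> lower by (intro cInf_lower bdd_belowI2[of _ "g q"]) auto
    ultimately show "Inf (g ` {q'. q' > q}) \<le> g q + e"
      by simp
  qed
qed

lemma rats_above_nonempty: "{q. x \<le> real_of_rat q} \<noteq> {}"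
proof -
  have "x \<le> real_of_rat (of_int \<lceil>x\<rceil>)"
    by (simp add: of_rat_of_int_eq)
  then show ?thesis by blast
qed

lemma u_plus_notin_Theta: "\<omega> \<notin> Theta u \<Longrightarrow> u_plus u \<omega> x = x"
proof -
  assume "\<omega> \<notin> Theta u"
  then have "(\<lambda>q. u \<omega> q * indicator (Theta u) \<omega> + x * indicator (- Theta u) \<omega>) ` {q. x \<le> real_of_rat q} = {x}"
    using rats_above_nonempty[of x] by auto
  then show ?thesis unfolding u_plus_def by simp
qed

lemma u_plus_in_Theta: "\<omega> \<in> Theta u \<Longrightarrow> u_plus u \<omega> x = Inf (u \<omega> ` {q. x \<le> real_of_rat q})"
  unfolding u_plus_def by simp

lemma bdd_below_u_rats_above:
  assumes "\<omega> \<in> Theta u"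
  shows "bdd_below (u \<omega> ` {q. x \<le> real_of_rat q})"
proof (rule bdd_belowI2)
  fix q assume "q \<in> {q. x \<le> real_of_rat q}"
  then have "real_of_rat (of_int \<lfloor>x\<rfloor>) \<le> real_of_rat q"
    by (simp add: of_rat_of_int_eq) linarith
  then have "of_int \<lfloor>x\<rfloor> \<le> q"
    by (simp only: of_rat_less_eq)
  then show "u \<omega> (of_int \<lfloor>x\<rfloor>) \<le> u \<omega> q"
    using Theta_mono[OF assms] by blast
qed

lemma u_plus_of_rat: "\<omega> \<in> Theta u \<Longrightarrow> u_plus u \<omega> (real_of_rat r) = u \<omega> r"
  unfolding u_plus_in_Theta
  by (rule cInf_eq_minimum) (auto simp: of_rat_less_eq intro: Theta_mono)

lemma u_plus_mono:
  assumes "\<omega> \<in> Theta u" and "x \<le> y"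
  shows "u_plus u \<omega> x \<le> u_plus u \<omega> y"
  unfolding u_plus_in_Theta[OF assms(1)]
  using rats_above_nonempty[of y] assms
  by (intro cInf_superset_mono bdd_below_u_rats_above image_mono) auto

lemma u_plus_right_approx:
  assumes "\<omega> \<in> Theta u" and "e > 0"
  obtains q where "x < real_of_rat q" and "u \<omega> q < u_plus u \<omega> x + e"
proof -
  have "Inf (u \<omega> ` {q. x \<le> real_of_rat q}) < u_plus u \<omega> x + e / 2"
    using u_plus_in_Theta[OF assms(1)] assms(2) by simp
  then have "\<exists>y \<in> u \<omega> ` {q. x \<le> real_of_rat q}. y < u_plus u \<omega> x + e / 2"
    using rats_above_nonempty[of x] by (intro cInf_lessD) auto
  then obtain q where q: "x \<le> real_of_rat q" "u \<omega> q < u_plus u \<omega> x + e / 2"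
    by auto
  have "e / 2 > 0"
    using assms(2) by simp
  then obtain q' where "q' > q" "u \<omega> q' < u \<omega> q + e / 2"
    by (rule Theta_right_approx[OF assms(1)])
  moreover from \<open>q' > q\<close> have "real_of_rat q < real_of_rat q'"
    by (simp only: of_rat_less)
  ultimately have "x < real_of_rat q'" "u \<omega> q' < u_plus u \<omega> x + e"
    using q by linarith+
  then show ?thesis by (rule that)
qed

lemma tendsto_u_plus_from_above:
  assumes \<omega>: "\<omega> \<in> Theta u" and above: "\<And>n. x \<le> xs n" and lim: "xs \<longlonglongrightarrow> x"
  shows "(\<lambda>n. u_plus u \<omega> (xs n)) \<longlonglongrightarrow> u_plus u \<omega> x"
proof (rule order_tendstoI)
  fix a assume "a < u_plus u \<omega> x"
  then show "\<forall>\<^sub>F n in sequentially. a < u_plus u \<omega> (xs n)"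
    using u_plus_mono[OF \<omega> above] by (intro always_eventually allI) (blast intro: less_le_trans)
next
  fix a assume "u_plus u \<omega> x < a"
  then obtain q where q: "x < real_of_rat q" "u \<omega> q < a"
    using u_plus_right_approx[OF \<omega>, of "a - u_plus u \<omega> x" x] by auto
  have "\<forall>\<^sub>F n in sequentially. xs n < real_of_rat q"
    using order_tendstoD(2)[OF lim q(1)] .
  then show "\<forall>\<^sub>F n in sequentially. u_plus u \<omega> (xs n) < a"
  proof eventually_elim
    case (elim n)
    then have "u_plus u \<omega> (xs n) \<le> u \<omega> q"
      using u_plus_mono[OF \<omega>, of "xs n" "real_of_rat q"] u_plus_of_rat[OF \<omega>] by simp
    with q show ?case by simp
  qed
qed

definition dyadic_ceiling :: "nat \<Rightarrow> real \<Rightarrow> rat" where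
  "dyadic_ceiling n x = of_int \<lceil>x * 2 ^ n\<rceil> / 2 ^ n"

lemma of_rat_dyadic_ceiling: "real_of_rat (dyadic_ceiling n x) = of_int \<lceil>x * 2 ^ n\<rceil> / 2 ^ n"
  unfolding dyadic_ceiling_def by (simp add: of_rat_divide of_rat_power)

lemma dyadic_ceiling_ge: "x \<le> real_of_rat (dyadic_ceiling n x)"
  using le_of_int_ceiling[of "x * 2 ^ n"] by (simp add: of_rat_dyadic_ceiling field_simps)

lemma dyadic_ceiling_le: "real_of_rat (dyadic_ceiling n x) \<le> x + (1 / 2) ^ n"
  using of_int_ceiling_le_add_one[of "x * 2 ^ n"]
  by (simp add: of_rat_dyadic_ceiling field_simps power_one_over)

lemma abs_dyadic_ceiling_le: "\<bar>real_of_rat (dyadic_ceiling n x)\<bar> \<le> \<bar>x\<bar> + 1"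
proof -
  have "(1 / 2 :: real) ^ n \<le> 1"
    by (simp add: power_le_one)
  then show ?thesis
    using dyadic_ceiling_ge[of x n] dyadic_ceiling_le[of n x] by linarith
qed

lemma dyadic_ceiling_tendsto: "(\<lambda>n. real_of_rat (dyadic_ceiling n x)) \<longlonglongrightarrow> x"
proof (rule tendsto_sandwich[of "\<lambda>_. x" _ _ "\<lambda>n. x + (1 / 2) ^ n"])
  have "(\<lambda>n. x + (1 / 2 :: real) ^ n) \<longlonglongrightarrow> x + 0"
    by (intro tendsto_add tendsto_const LIMSEQ_realpow_zero) auto
  then show "(\<lambda>n. x + (1 / 2) ^ n) \<longlonglongrightarrow> x"
    by simp
qed (simp_all add: dyadic_ceiling_ge dyadic_ceiling_le)

lemma finite_dyadic_ceiling_image: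
  assumes "\<And>x. x \<in> S \<Longrightarrow> \<bar>x\<bar> \<le> B"
  shows "finite (dyadic_ceiling n ` S)"
proof -
  let ?K = "\<lceil>B * 2 ^ n\<rceil>"
  have "dyadic_ceiling n ` S \<subseteq> (\<lambda>k. of_int k / 2 ^ n) ` {-?K .. ?K}"
  proof
    fix y assume "y \<in> dyadic_ceiling n ` S"
    then obtain x where "x \<in> S" and y: "y = dyadic_ceiling n x"
      by blast
    then have "\<bar>x * 2 ^ n\<bar> \<le> B * 2 ^ n"
      using assms by (simp add: abs_mult)
    then have "-(B * 2 ^ n) \<le> x * 2 ^ n" "x * 2 ^ n \<le> B * 2 ^ n"
      by (simp_all add: abs_le_iff)
    moreover have "B * 2 ^ n \<le> of_int ?K" "x * 2 ^ n \<le> of_int \<lceil>x * 2 ^ n\<rceil>"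
      by (simp_all only: le_of_int_ceiling)
    ultimately have "real_of_int (-?K) \<le> of_int \<lceil>x * 2 ^ n\<rceil>" "\<lceil>x * 2 ^ n\<rceil> \<le> ?K"
      by (simp_all only: of_int_minus ceiling_mono)
    then have "\<lceil>x * 2 ^ n\<rceil> \<in> {-?K .. ?K}"
      by (simp only: of_int_le_iff atLeastAtMost_iff)
    then show "y \<in> (\<lambda>k. of_int k / 2 ^ n) ` {-?K .. ?K}"
      unfolding y dyadic_ceiling_def by blast
  qed
  then show ?thesis
    by (rule finite_subset) simp
qed

lemma measurable_dyadic_ceiling:
  assumes [measurable]: "f \<in> borel_measurable M"
  shows "(\<lambda>\<omega>. dyadic_ceiling n (f \<omega>)) \<in> measurable M (count_space UNIV)"
  unfolding measurable_count_space_eq2_countable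
proof (intro conjI ballI)
  fix a
  have "(\<lambda>\<omega>. dyadic_ceiling n (f \<omega>)) -` {a} \<inter> space M
      = {\<omega>\<in>space M. real_of_int \<lceil>f \<omega> * 2 ^ n\<rceil> / 2 ^ n = real_of_rat a}"
    by (auto simp flip: of_rat_dyadic_ceiling)
  also have "\<dots> \<in> sets M"
    by measurable
  finally show "(\<lambda>\<omega>. dyadic_ceiling n (f \<omega>)) -` {a} \<inter> space M \<in> sets M" .
qed auto

lemma tendsto_u_plus_dyadic_ceiling:
  "(\<lambda>n. u_plus u \<omega> (real_of_rat (dyadic_ceiling n x))) \<longlonglongrightarrow> u_plus u \<omega> x"
proof (cases "\<omega> \<in> Theta u")
  case True
  then show ?thesis
    using tendsto_u_plus_from_above[OF True, of x "\<lambda>n. real_of_rat (dyadic_ceiling n x)"]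
    by (simp add: dyadic_ceiling_ge dyadic_ceiling_tendsto)
next
  case False
  then show ?thesis
    using dyadic_ceiling_tendsto by (simp add: u_plus_notin_Theta)
qed

lemma Linf_const: "(\<lambda>_. c) \<in> Linf M"
  unfolding Linf_def by auto

lemma Linf_mult_indicator: "f \<in> Linf M \<Longrightarrow> A \<in> sets M \<Longrightarrow> (\<lambda>\<omega>. f \<omega> * indicator A \<omega>) \<in> Linf M"
  unfolding Linf_def by (force simp: indicator_def)

lemma finite_signed_measure_Un:
  assumes \<mu>: "finite_signed_measure M \<mu>" and "A \<in> sets M" "B \<in> sets M" "A \<inter> B = {}"
  shows "\<mu> (A \<union> B) = \<mu> A + \<mu> B"
proof -
  have "range (binaryset A B) \<subseteq> sets M" "disjoint_family (binaryset A B)"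
    using assms by (auto simp: range_binaryset_eq disjoint_family_on_def binaryset_def)
  then have "(\<lambda>n. \<mu> (binaryset A B n)) sums \<mu> (A \<union> B)"
    using \<mu> unfolding finite_signed_measure_def UN_binaryset_eq[symmetric] by blast
  moreover have "(\<lambda>n. \<mu> (binaryset A B n)) sums (\<mu> A + \<mu> B)"
    using \<mu> by (intro binaryset_sums) (simp add: finite_signed_measure_def)
  ultimately show ?thesis
    by (rule sums_unique2)
qed

lemma finite_signed_measure_finite_UN:
  assumes \<mu>: "finite_signed_measure M \<mu>" and "finite S"
  shows "(\<And>s. s \<in> S \<Longrightarrow> A s \<in> sets M) \<Longrightarrow> disjoint_family_on A S \<Longrightarrow>
    \<mu> (\<Union>s\<in>S. A s) = (\<Sum>s\<in>S. \<mu> (A s))"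
  using \<open>finite S\<close>
proof (induction S rule: finite_induct)
  case empty
  then show ?case
    using \<mu> by (simp add: finite_signed_measure_def)
next
  case (insert x F)
  have "A x \<inter> (\<Union>s\<in>F. A s) = {}"
    using insert.prems(2) insert.hyps(2) unfolding disjoint_family_on_def by auto
  then have "\<mu> (\<Union>s\<in>insert x F. A s) = \<mu> (A x) + \<mu> (\<Union>s\<in>F. A s)"
    using insert by (auto intro!: finite_signed_measure_Un[OF \<mu>] sets.finite_UN)
  also have "\<mu> (\<Union>s\<in>F. A s) = (\<Sum>s\<in>F. \<mu> (A s))"
    using insert by (intro insert.IH) (auto simp: disjoint_family_on_def)
  finally show ?case
    using insert.hyps by simp
qed

locale continuous_valuation =
  fixes M :: "'a measure"
    and V :: "'a set \<Rightarrow> ('a \<Rightarrow> real) \<Rightarrow> real"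
    and u :: "'a \<Rightarrow> rat \<Rightarrow> real"
  assumes C1_signed: "\<And>f. f \<in> Linf M \<Longrightarrow> finite_signed_measure M (\<lambda>A. V A f)"
    and C1_prob: "probability_set_function M (\<lambda>A. V A (\<lambda>_. 1))"
    and C2: "\<And>A f. A \<in> sets M \<Longrightarrow> f \<in> Linf M \<Longrightarrow>
               V A f = V (space M) (\<lambda>\<omega>. f \<omega> * indicator A \<omega>)"
    and C3_mono: "\<And>A f g. A \<in> sets M \<Longrightarrow> f \<in> Linf M \<Longrightarrow> g \<in> Linf M \<Longrightarrow>
               (\<forall>\<omega>\<in>space M. f \<omega> \<le> g \<omega>) \<Longrightarrow> V A f \<le> V A g"
    and C3_strict: "\<And>A (x::real) y. A \<in> sets M \<Longrightarrow> V A (\<lambda>_. 1) > 0 \<Longrightarrow> x < y \<Longrightarrow>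
               V A (\<lambda>_. x) < V A (\<lambda>_. y)"
    and C4: "\<And>A fn f. A \<in> sets M \<Longrightarrow> (\<forall>n. fn n \<in> Linf M) \<Longrightarrow> f \<in> Linf M \<Longrightarrow>
               (\<exists>B. \<forall>n. \<forall>\<omega>\<in>space M. \<bar>fn n \<omega>\<bar> \<le> B) \<Longrightarrow>
               (\<forall>\<omega>\<in>space M. (\<lambda>n. fn n \<omega>) \<longlonglongrightarrow> f \<omega>) \<Longrightarrow>
               (\<lambda>n. V A (fn n)) \<longlonglongrightarrow> V A f"
    and u_meas: "\<And>q. (\<lambda>\<omega>. u \<omega> q) \<in> borel_measurable M"
    and u_int: "\<And>q. integrable (Pm M V) (\<lambda>\<omega>. u \<omega> q)"
    and u_RN: "\<And>q A. A \<in> sets M \<Longrightarrow>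
               V A (\<lambda>_. real_of_rat q) = set_lebesgue_integral (Pm M V) A (\<lambda>\<omega>. u \<omega> q)"
begin

abbreviation "P \<equiv> Pm M V"

lemma sets_P [simp, measurable_cong]: "sets P = sets M"
  unfolding Pm_def by simp

lemma space_P [simp]: "space P = space M"
  unfolding Pm_def by simp

lemma V_one_nonneg: "A \<in> sets M \<Longrightarrow> 0 \<le> V A (\<lambda>_. 1)"
  using C1_prob unfolding probability_set_function_def by auto

lemma emeasure_P: "A \<in> sets M \<Longrightarrow> emeasure P A = ennreal (V A (\<lambda>_. 1))"
  unfolding Pm_def
proof (rule emeasure_measure_of_sigma)
  show "sigma_algebra (space M) (sets M)"
    by (rule sets.sigma_algebra_axioms)
  have \<mu>: "finite_signed_measure M (\<lambda>A. V A (\<lambda>_. 1))"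
    using C1_prob unfolding probability_set_function_def by auto
  then show "positive (sets M) (\<lambda>A. ennreal (V A (\<lambda>_. 1)))"
    unfolding positive_def finite_signed_measure_def by auto
  show "countably_additive (sets M) (\<lambda>A. ennreal (V A (\<lambda>_. 1)))"
    unfolding countably_additive_def
  proof safe
    fix A :: "nat \<Rightarrow> 'a set" assume A: "range A \<subseteq> sets M" "disjoint_family A"
    then have "(\<lambda>n. V (A n) (\<lambda>_. 1)) sums V (\<Union>n. A n) (\<lambda>_. 1)"
      using \<mu> unfolding finite_signed_measure_def by auto
    moreover from this have "(\<Sum>n. ennreal (V (A n) (\<lambda>_. 1))) = ennreal (\<Sum>n. V (A n) (\<lambda>_. 1))"
      using A(1) by (intro suminf_ennreal2) (auto intro!: V_one_nonneg simp: sums_iff)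
    ultimately show "(\<Sum>n. ennreal (V (A n) (\<lambda>_. 1))) = ennreal (V (\<Union> (range A)) (\<lambda>_. 1))"
      by (simp add: sums_iff)
  qed
qed

lemma V_cong:
  assumes A: "A \<in> sets M" and f: "f \<in> Linf M" and g: "g \<in> Linf M"
    and eq: "\<And>\<omega>. \<omega> \<in> A \<Longrightarrow> f \<omega> = g \<omega>"
  shows "V A f = V A g"
proof -
  have "\<forall>\<omega>\<in>space M. f \<omega> * indicator A \<omega> = g \<omega> * indicator A \<omega>"
    using eq by (simp add: indicator_def)
  then have "V (space M) (\<lambda>\<omega>. f \<omega> * indicator A \<omega>) = V (space M) (\<lambda>\<omega>. g \<omega> * indicator A \<omega>)"
    using Linf_mult_indicator[OF f A] Linf_mult_indicator[OF g A]
    by (intro antisym C3_mono) auto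
  then show ?thesis
    using C2[OF A f] C2[OF A g] by simp
qed

lemma V_space_of_rat: "V (space M) (\<lambda>_. real_of_rat q) = integral\<^sup>L P (\<lambda>\<omega>. u \<omega> q)"
proof -
  have "V (space M) (\<lambda>_. real_of_rat q) = set_lebesgue_integral P (space M) (\<lambda>\<omega>. u \<omega> q)"
    by (rule u_RN) simp
  also have "\<dots> = integral\<^sup>L P (\<lambda>\<omega>. u \<omega> q)"
    unfolding set_lebesgue_integral_def by (intro Bochner_Integration.integral_cong) auto
  finally show ?thesis .
qed

lemma tendsto_V_const:
  assumes "A \<in> sets M" and "xs \<longlonglongrightarrow> x"
  shows "(\<lambda>n. V A (\<lambda>_. xs n)) \<longlonglongrightarrow> V A (\<lambda>_. x)"
proof (rule C4)
  obtain B where "\<And>n. norm (xs n) \<le> B"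
    using convergent_imp_Bseq[of xs] assms(2) by (auto simp: convergent_def Bseq_def)
  then show "\<exists>B. \<forall>n. \<forall>\<omega>\<in>space M. \<bar>xs n\<bar> \<le> B"
    by auto
  show "\<forall>n. (\<lambda>_. xs n) \<in> Linf M" "(\<lambda>_. x) \<in> Linf M"
    by (simp_all add: Linf_const)
  show "\<forall>\<omega>\<in>space M. (\<lambda>n. xs n) \<longlonglongrightarrow> x"
    using assms(2) by simp
qed (fact assms)

lemma AE_u_less:
  assumes "q1 < q2"
  shows "AE \<omega> in P. u \<omega> q1 < u \<omega> q2"
proof -
  define A where "A = {\<omega>\<in>space M. u \<omega> q2 \<le> u \<omega> q1}"
  have A: "A \<in> sets M"
    unfolding A_def using u_meas by measurable
  have "V A (\<lambda>_. real_of_rat q2) \<le> V A (\<lambda>_. real_of_rat q1)"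
    unfolding u_RN[OF A] set_lebesgue_integral_def
    using A u_int by (intro integral_mono integrable_mult_indicator) (auto simp: A_def indicator_def)
  then have "\<not> V A (\<lambda>_. 1) > 0"
    using C3_strict[OF A, of "real_of_rat q1" "real_of_rat q2"] assms by (auto simp: of_rat_less)
  then have "emeasure P A = 0"
    using V_one_nonneg[OF A] by (simp add: emeasure_P[OF A])
  then show ?thesis
    by (subst AE_iff_measurable[OF _ refl]) (auto simp: A_def not_less intro!: A[unfolded A_def])
qed

lemma AE_u_strict_mono: "AE \<omega> in P. strict_mono (u \<omega>)"
  using AE_u_less unfolding strict_mono_def by (simp add: AE_all_countable)

lemma nn_integral_u_increment:
  assumes "q < q'"
  shows "(\<integral>\<^sup>+\<omega>. ennreal (u \<omega> q' - u \<omega> q) \<partial>P)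
    = ennreal (V (space M) (\<lambda>_. real_of_rat q') - V (space M) (\<lambda>_. real_of_rat q))"
proof -
  have "(\<integral>\<^sup>+\<omega>. ennreal (u \<omega> q' - u \<omega> q) \<partial>P) = ennreal (integral\<^sup>L P (\<lambda>\<omega>. u \<omega> q' - u \<omega> q))"
    using u_int AE_u_less[OF assms]
    by (intro nn_integral_eq_integral) (auto elim!: AE_mp)
  then show ?thesis
    using u_int by (simp add: V_space_of_rat)
qed

(* Right continuity comes from (C4) applied to the constants q + 1/(n+1): the increments
   u(q + 1/(n+1)) - u(q) are a.e. nonnegative and their integrals tend to zero. *)
lemma AE_u_right_continuous: "AE \<omega> in P. u \<omega> q = Inf (u \<omega> ` {q'. q' > q})"
proof -
  define qs where "qs n = q + 1 / (of_nat n + 1)" for n :: nat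
  have qs_gt: "qs n > q" for n
    unfolding qs_def by (simp add: add_pos_pos)
  have "(\<lambda>n. 1 / (real n + 1)) \<longlonglongrightarrow> 0"
    using LIMSEQ_inverse_real_of_nat by (simp add: inverse_eq_divide add.commute)
  then have "(\<lambda>n. real_of_rat q + 1 / (real n + 1)) \<longlonglongrightarrow> real_of_rat q + 0"
    by (intro tendsto_add tendsto_const)
  then have "(\<lambda>n. real_of_rat (qs n)) \<longlonglongrightarrow> real_of_rat q"
    by (simp add: qs_def of_rat_add of_rat_divide)
  then have "(\<lambda>n. V (space M) (\<lambda>_. real_of_rat (qs n))) \<longlonglongrightarrow> V (space M) (\<lambda>_. real_of_rat q)"
    by (rule tendsto_V_const[OF sets.top])
  then have "(\<lambda>n. V (space M) (\<lambda>_. real_of_rat (qs n)) - V (space M) (\<lambda>_. real_of_rat q)) \<longlonglongrightarrow> 0"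
    by (rule LIM_zero)
  then have lim: "(\<lambda>n. \<integral>\<^sup>+\<omega>. ennreal (u \<omega> (qs n) - u \<omega> q) \<partial>P) \<longlonglongrightarrow> 0"
    unfolding nn_integral_u_increment[OF qs_gt] by (rule tendsto_ennrealI[where x=0, simplified])
  define H where "H \<omega> = (INF n. ennreal (u \<omega> (qs n) - u \<omega> q))" for \<omega>
  have "integral\<^sup>N P H \<le> 0"
    using lim by (rule LIMSEQ_le_const) (auto simp: H_def intro!: exI nn_integral_mono INF_lower)
  moreover have "H \<in> borel_measurable P"
    unfolding H_def using u_meas by measurable
  ultimately have "AE \<omega> in P. H \<omega> = 0"
    by (simp add: nn_integral_0_iff_AE)
  then show ?thesis
    using AE_u_strict_mono
  proof eventually_elim
    case (elim \<omega>)
    show ?case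
    proof (rule Inf_greater_rat_eqI)
      show "mono (u \<omega>)"
        using elim(2) by (rule strict_mono_mono)
      fix e :: real assume "e > 0"
      then have "(INF n. ennreal (u \<omega> (qs n) - u \<omega> q)) < ennreal e"
        using elim(1) by (simp add: H_def)
      then obtain n where "ennreal (u \<omega> (qs n) - u \<omega> q) < ennreal e"
        by (auto simp: INF_less_iff)
      moreover have "u \<omega> q < u \<omega> (qs n)"
        using strict_monoD[OF elim(2) qs_gt] .
      ultimately have "u \<omega> (qs n) < u \<omega> q + e"
        by (simp add: ennreal_less_iff)
      then show "\<exists>q'>q. u \<omega> q' < u \<omega> q + e"
        using qs_gt by blast
    qed
  qed
qed

lemma AE_in_Theta: "AE \<omega> in P. \<omega> \<in> Theta u"
proof -
  have "AE \<omega> in P. \<forall>q. u \<omega> q = Inf (u \<omega> ` {q'. q' > q})"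
    unfolding AE_all_countable using AE_u_right_continuous by blast
  with AE_u_strict_mono show ?thesis
    by eventually_elim (unfold Theta_def strict_mono_def, blast)
qed

lemma pred_in_Theta [measurable]: "Measurable.pred M (\<lambda>\<omega>. \<omega> \<in> Theta u)"
proof -
  have "(\<lambda>\<omega>. \<omega> \<in> Theta u) = (\<lambda>\<omega>. (\<forall>q1 q2. q1 < q2 \<longrightarrow> u \<omega> q1 < u \<omega> q2)
      \<and> (\<forall>q. u \<omega> q = (INF q'\<in>{q'. q' > q}. u \<omega> q')))"
    unfolding Theta_def by blast
  also have "Measurable.pred M \<dots>"
    using u_meas by measurable
  finally show ?thesis .
qed

lemma borel_measurable_u_comp:
  "r \<in> measurable M (count_space UNIV) \<Longrightarrow> (\<lambda>\<omega>. u \<omega> (r \<omega>)) \<in> borel_measurable M"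
  using measurable_compose_countable[where f="\<lambda>q \<omega>. u \<omega> q", OF u_meas] by simp

lemma borel_measurable_u_plus:
  assumes [measurable]: "f \<in> borel_measurable M"
  shows "(\<lambda>\<omega>. u_plus u \<omega> (f \<omega>)) \<in> borel_measurable M"
proof (rule borel_measurable_LIMSEQ_real)
  show "(\<lambda>n. u_plus u \<omega> (real_of_rat (dyadic_ceiling n (f \<omega>)))) \<longlonglongrightarrow> u_plus u \<omega> (f \<omega>)" for \<omega>
    by (rule tendsto_u_plus_dyadic_ceiling)
  fix n
  have "(\<lambda>\<omega>. u_plus u \<omega> (real_of_rat (dyadic_ceiling n (f \<omega>))))
      = (\<lambda>\<omega>. if \<omega> \<in> Theta u then u \<omega> (dyadic_ceiling n (f \<omega>)) else real_of_rat (dyadic_ceiling n (f \<omega>)))"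
    by (auto simp: u_plus_of_rat u_plus_notin_Theta)
  also have "\<dots> \<in> borel_measurable M"
    using borel_measurable_u_comp[OF measurable_dyadic_ceiling[OF assms, of n]]
    unfolding of_rat_dyadic_ceiling by measurable
  finally show "(\<lambda>\<omega>. u_plus u \<omega> (real_of_rat (dyadic_ceiling n (f \<omega>)))) \<in> borel_measurable M" .
qed

lemma V_finite_range_rat:
  fixes r :: "'a \<Rightarrow> rat"
  assumes r: "(\<lambda>\<omega>. real_of_rat (r \<omega>)) \<in> Linf M" and fin: "finite (r ` space M)"
  shows "integrable P (\<lambda>\<omega>. u \<omega> (r \<omega>))"
    and "V (space M) (\<lambda>\<omega>. real_of_rat (r \<omega>)) = (\<integral>\<omega>. u \<omega> (r \<omega>) \<partial>P)"
proof -
  have [measurable]: "(\<lambda>\<omega>. real_of_rat (r \<omega>)) \<in> borel_measurable M"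
    using r unfolding Linf_def by auto
  define S where "S = r ` space M"
  define A where "A s = {\<omega>\<in>space M. real_of_rat (r \<omega>) = real_of_rat s}" for s
  have A [measurable]: "A s \<in> sets M" for s
    unfolding A_def by measurable
  have level_sum: "u \<omega> (r \<omega>) = (\<Sum>s\<in>S. indicator (A s) \<omega> *\<^sub>R u \<omega> s)" if "\<omega> \<in> space P" for \<omega>
  proof -
    have "(\<Sum>s\<in>S. indicator (A s) \<omega> *\<^sub>R u \<omega> s) = (\<Sum>s\<in>S. if s = r \<omega> then u \<omega> s else 0)"
      using that by (intro sum.cong) (auto simp: A_def)
    also have "\<dots> = u \<omega> (r \<omega>)"
      using that fin by (simp add: S_def)
    finally show ?thesis ..
  qed
  have pieces: "integrable P (\<lambda>\<omega>. indicator (A s) \<omega> *\<^sub>R u \<omega> s)" for s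
    using A by (intro integrable_mult_indicator u_int) simp
  show "integrable P (\<lambda>\<omega>. u \<omega> (r \<omega>))"
    using pieces by (subst Bochner_Integration.integrable_cong[OF refl level_sum]) auto
  have "V (space M) (\<lambda>\<omega>. real_of_rat (r \<omega>)) = (\<Sum>s\<in>S. V (A s) (\<lambda>\<omega>. real_of_rat (r \<omega>)))"
  proof -
    have "space M = (\<Union>s\<in>S. A s)"
      unfolding S_def A_def by auto
    moreover have "disjoint_family_on A S"
      unfolding disjoint_family_on_def A_def by auto
    ultimately show ?thesis
      using finite_signed_measure_finite_UN[OF C1_signed[OF r], of S A] fin by (simp add: S_def)
  qed
  also have "\<dots> = (\<Sum>s\<in>S. V (A s) (\<lambda>_. real_of_rat s))"
    by (intro sum.cong refl V_cong r Linf_const A) (simp add: A_def)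
  also have "\<dots> = (\<Sum>s\<in>S. \<integral>\<omega>. indicator (A s) \<omega> *\<^sub>R u \<omega> s \<partial>P)"
    by (simp add: u_RN set_lebesgue_integral_def)
  also have "\<dots> = (\<integral>\<omega>. (\<Sum>s\<in>S. indicator (A s) \<omega> *\<^sub>R u \<omega> s) \<partial>P)"
    by (rule Bochner_Integration.integral_sum[symmetric]) (rule pieces)
  also have "\<dots> = (\<integral>\<omega>. u \<omega> (r \<omega>) \<partial>P)"
    by (rule Bochner_Integration.integral_cong[OF refl level_sum[symmetric]])
  finally show "V (space M) (\<lambda>\<omega>. real_of_rat (r \<omega>)) = (\<integral>\<omega>. u \<omega> (r \<omega>) \<partial>P)" .
qed

lemma AE_abs_u_le:
  assumes "\<And>\<omega>. \<omega> \<in> space M \<Longrightarrow> \<bar>r \<omega>\<bar> \<le> c"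
  shows "AE \<omega> in P. norm (u \<omega> (r \<omega>)) \<le> \<bar>u \<omega> (- c)\<bar> + \<bar>u \<omega> c\<bar>"
  using AE_in_Theta AE_space
proof eventually_elim
  case (elim \<omega>)
  then show ?case
    using Theta_abs_le[OF elim(1) assms] by simp
qed

lemma AE_tendsto_u_dyadic_ceiling:
  "AE \<omega> in P. (\<lambda>n. u \<omega> (dyadic_ceiling n (x \<omega>))) \<longlonglongrightarrow> u_plus u \<omega> (x \<omega>)"
  using AE_in_Theta
proof eventually_elim
  case (elim \<omega>)
  then show ?case
    using tendsto_u_plus_dyadic_ceiling[of u \<omega> "x \<omega>"] by (simp add: u_plus_of_rat)
qed

lemma V_eq_integral_u_plus:
  assumes f: "f \<in> Linf M"
  shows "integrable P (\<lambda>\<omega>. u_plus u \<omega> (f \<omega>))"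
    and "V (space M) f = (\<integral>\<omega>. u_plus u \<omega> (f \<omega>) \<partial>P)"
proof -
  have [measurable]: "f \<in> borel_measurable M"
    using f unfolding Linf_def by auto
  obtain B where B: "\<And>\<omega>. \<omega> \<in> space M \<Longrightarrow> \<bar>f \<omega>\<bar> \<le> B"
    using f unfolding Linf_def by auto
  define c :: rat where "c = of_int \<lceil>B\<rceil> + 1"
  have "B + 1 \<le> real_of_rat c"
    using le_of_int_ceiling[of B] by (simp add: c_def of_rat_add of_rat_of_int_eq)
  define r where "r n \<omega> = dyadic_ceiling n (f \<omega>)" for n \<omega>
  have r_bounded: "\<bar>real_of_rat (r n \<omega>)\<bar> \<le> real_of_rat c" if "\<omega> \<in> space M" for n \<omega>
    using abs_dyadic_ceiling_le[of n "f \<omega>"] B[OF that] \<open>B + 1 \<le> real_of_rat c\<close>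
    unfolding r_def by linarith
  have r_Linf: "(\<lambda>\<omega>. real_of_rat (r n \<omega>)) \<in> Linf M" for n
  proof -
    have "(\<lambda>\<omega>. real_of_rat (r n \<omega>)) \<in> borel_measurable M"
      unfolding r_def of_rat_dyadic_ceiling by measurable
    then show ?thesis
      using r_bounded unfolding Linf_def by blast
  qed
  have r_finite: "finite (r n ` space M)" for n
    using finite_dyadic_ceiling_image[of "f ` space M" B n] B
    by (auto simp: r_def image_image)
  have "(\<lambda>n. V (space M) (\<lambda>\<omega>. real_of_rat (r n \<omega>))) \<longlonglongrightarrow> V (space M) f"
    using r_Linf f r_bounded unfolding r_def
    by (intro C4) (auto intro: dyadic_ceiling_tendsto)
  then have lim_V: "(\<lambda>n. \<integral>\<omega>. u \<omega> (r n \<omega>) \<partial>P) \<longlonglongrightarrow> V (space M) f"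
    using V_finite_range_rat(2)[OF r_Linf r_finite] by simp
  have r_measurable: "(\<lambda>\<omega>. u \<omega> (r n \<omega>)) \<in> borel_measurable P" for n
    unfolding r_def using borel_measurable_u_comp[OF measurable_dyadic_ceiling] by simp
  have dominated: "AE \<omega> in P. norm (u \<omega> (r n \<omega>)) \<le> \<bar>u \<omega> (- c)\<bar> + \<bar>u \<omega> c\<bar>" for n
    using r_bounded by (intro AE_abs_u_le) (simp only: abs_of_rat of_rat_less_eq)
  have converges: "AE \<omega> in P. (\<lambda>n. u \<omega> (r n \<omega>)) \<longlonglongrightarrow> u_plus u \<omega> (f \<omega>)"
    unfolding r_def by (rule AE_tendsto_u_dyadic_ceiling)
  have u_plus_measurable: "(\<lambda>\<omega>. u_plus u \<omega> (f \<omega>)) \<in> borel_measurable P"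
    using borel_measurable_u_plus[of f] by simp
  have bound_integrable: "integrable P (\<lambda>\<omega>. \<bar>u \<omega> (- c)\<bar> + \<bar>u \<omega> c\<bar>)"
    using u_int by auto
  note dominated_convergence = u_plus_measurable r_measurable bound_integrable converges dominated
  show "integrable P (\<lambda>\<omega>. u_plus u \<omega> (f \<omega>))"
    by (rule integrable_dominated_convergence[OF dominated_convergence])
  have "(\<lambda>n. \<integral>\<omega>. u \<omega> (r n \<omega>) \<partial>P) \<longlonglongrightarrow> (\<integral>\<omega>. u_plus u \<omega> (f \<omega>) \<partial>P)"
    by (rule integral_dominated_convergence[OF dominated_convergence])
  with lim_V show "V (space M) f = (\<integral>\<omega>. u_plus u \<omega> (f \<omega>) \<partial>P)"
    by (rule LIMSEQ_unique)
qed

end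

theorem mainTheorem11:
  fixes M :: "'a measure"
    and V :: "'a set \<Rightarrow> ('a \<Rightarrow> real) \<Rightarrow> real"
    and u :: "'a \<Rightarrow> rat \<Rightarrow> real"
  assumes C1_signed: "\<And>f. f \<in> Linf M \<Longrightarrow> finite_signed_measure M (\<lambda>A. V A f)"
    and C1_zero: "\<And>A. A \<in> sets M \<Longrightarrow> V A (\<lambda>_. 0) = 0"
    and C1_prob: "probability_set_function M (\<lambda>A. V A (\<lambda>_. 1))"
    and C2: "\<And>A f. A \<in> sets M \<Longrightarrow> f \<in> Linf M \<Longrightarrow>
               V A f = V (space M) (\<lambda>\<omega>. f \<omega> * indicator A \<omega>)"
    and C3_mono: "\<And>A f g. A \<in> sets M \<Longrightarrow> f \<in> Linf M \<Longrightarrow> g \<in> Linf M \<Longrightarrow>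
               (\<forall>\<omega>\<in>space M. f \<omega> \<le> g \<omega>) \<Longrightarrow> V A f \<le> V A g"
    and C3_strict: "\<And>A (x::real) y. A \<in> sets M \<Longrightarrow> V A (\<lambda>_. 1) > 0 \<Longrightarrow> x < y \<Longrightarrow>
               V A (\<lambda>_. x) < V A (\<lambda>_. y)"
    and C4: "\<And>A fn f. A \<in> sets M \<Longrightarrow> (\<forall>n. fn n \<in> Linf M) \<Longrightarrow> f \<in> Linf M \<Longrightarrow>
               (\<exists>B. \<forall>n. \<forall>\<omega>\<in>space M. \<bar>fn n \<omega>\<bar> \<le> B) \<Longrightarrow>
               (\<forall>\<omega>\<in>space M. (\<lambda>n. fn n \<omega>) \<longlonglongrightarrow> f \<omega>) \<Longrightarrow>
               (\<lambda>n. V A (fn n)) \<longlonglongrightarrow> V A f"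
    and u_meas: "\<And>q. (\<lambda>\<omega>. u \<omega> q) \<in> borel_measurable M"
    and u_int: "\<And>q. integrable (Pm M V) (\<lambda>\<omega>. u \<omega> q)"
    and u_RN: "\<And>q A. A \<in> sets M \<Longrightarrow>
               V A (\<lambda>_. real_of_rat q) = set_lebesgue_integral (Pm M V) A (\<lambda>\<omega>. u \<omega> q)"
    and u_zero: "\<And>\<omega>. u \<omega> 0 = 0"
  shows "(\<forall>f\<in>Linf M. integrable (Pm M V) (\<lambda>\<omega>. u_plus u \<omega> (f \<omega>)))
       \<and> (\<forall>f\<in>Linf M. \<forall>g\<in>Linf M. (\<forall>\<omega>\<in>space M. f \<omega> \<le> g \<omega>) \<longrightarrow> T_u M V u f \<le> T_u M V u g)
       \<and> (\<forall>fn f. (\<forall>n. fn n \<in> Linf M) \<longrightarrow> f \<in> Linf M \<longrightarrow>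
               (\<exists>B. \<forall>n. \<forall>\<omega>\<in>space M. \<bar>fn n \<omega>\<bar> \<le> B) \<longrightarrow>
               (\<forall>\<omega>\<in>space M. (\<lambda>n. fn n \<omega>) \<longlonglongrightarrow> f \<omega>) \<longrightarrow>
               (\<lambda>n. T_u M V u (fn n)) \<longlonglongrightarrow> T_u M V u f)
       \<and> (\<forall>f\<in>Linf M. \<forall>A\<in>sets M. V A f = T_u M V u (\<lambda>\<omega>. f \<omega> * indicator A \<omega>))"
proof -
  interpret continuous_valuation M V u
    by unfold_locales (rule assms; assumption)+
  have T_eq_V: "T_u M V u f = V (space M) f" if "f \<in> Linf M" for f
    using V_eq_integral_u_plus(2)[OF that] by (simp add: T_u_def)
  show ?thesis
  proof (intro conjI ballI allI impI)
    show "integrable (Pm M V) (\<lambda>\<omega>. u_plus u \<omega> (f \<omega>))" if "f \<in> Linf M" for f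
      using V_eq_integral_u_plus(1)[OF that] .
    show "T_u M V u f \<le> T_u M V u g"
      if "f \<in> Linf M" "g \<in> Linf M" "\<forall>\<omega>\<in>space M. f \<omega> \<le> g \<omega>" for f g
      using that T_eq_V C3_mono[of "space M" f g] by simp
    show "(\<lambda>n. T_u M V u (fn n)) \<longlonglongrightarrow> T_u M V u f"
      if "\<forall>n. fn n \<in> Linf M" "f \<in> Linf M" "\<exists>B. \<forall>n. \<forall>\<omega>\<in>space M. \<bar>fn n \<omega>\<bar> \<le> B"
        "\<forall>\<omega>\<in>space M. (\<lambda>n. fn n \<omega>) \<longlonglongrightarrow> f \<omega>" for fn f
      using that T_eq_V C4[of "space M" fn f] by simp
    show "V A f = T_u M V u (\<lambda>\<omega>. f \<omega> * indicator A \<omega>)" if "f \<in> Linf M" "A \<in> sets M" for f A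
      using that T_eq_V[OF Linf_mult_indicator] C2 by simp
  qed
qed

end
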